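(* Let $\mathcal{G}=\{U^g\mid g\in G=\mathbb{Z}_2^{\times(n-k)}\}$ be the stabilizer group of an $[[n,k]]$ Pauli stabilizer code, indexed so that $U^e=I^{\otimes n}$ and $U^gU^h=U^{gh}$. There exists a subset $R$ consisting of $n-k$ of the $n$ physical qubits such that 1. $\mathcal{G}_R=\{U^g_R\mid g\in G\}$ is a faithful, unitary, possibly projective representation of $G$ on $\mathcal{H}_R=(\mathbb{C}^2)^{\otimes(n-k)}$ satisfying $U^g_RU^{g'}_R=c(g,g')U^{gg'}_R$ with $c(g,g')\in\{\pm1,\pm i\}$, and 2. there exists a seed state $\ket{e}_R\in\mathcal{H}_R$ such that $\{\ket{g}_R=U^g_R\ket{e}_R\mid g\in G\}$ is an orthonormal basis of $\mathcal{H}_R$ that transforms as $U^g_R\ket{g'}_R=c(g,g')\ket{gg'}_R$.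
   Context: $\mathcal{P}_n$ is the $n$-qubit Pauli group (operators $i^\lambda O_1\otimes\cdots\otimes O_n$, $\lambda\in\{0,1,2,3\}$, $O_j\in\{I,X,Y,Z\}$). An $[[n,k]]$ Pauli stabilizer code is given by a faithful unitary representation $g\mapsto U^g\in\mathcal{P}_n$ of $G=\mathbb{Z}_2^{\times(n-k)}$ on $(\mathbb{C}^2)^{\otimes n}$ with $-I\notin\mathcal{G}$. For a subset $R$ of $n-k$ qubits with complement $S$ and a Pauli string $U^g=i^\lambda O_1\otimes\cdots\otimes O_n$, $U^g_R$ denotes the Pauli string $\bigotimes_{a\in R}O_a$ on the qubits of $R$ with the prefactor removed (equivalently $U^g_R=2^{-k}\mathrm{Tr}_S[\pi_S(U^g)]$, where $\pi_S$ replaces the letters on $S$ by $I$ and removes the prefactor). The phases $c(g,g')$ are defined by $U^g_RU^{g'}_R=c(g,g')U^{gg'}_R$. *)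

theory Defs
  imports Complex_Main
begin

text \<open>Elements of Z_2^m are represented as subsets of {..<m} (indicator of the
  nonzero coordinates); the group law is symmetric difference, the identity is {}.\<close>

definition Z2grp :: "nat \<Rightarrow> nat set set" where
  "Z2grp m = Pow {..<m}"

definition gmul :: "nat set \<Rightarrow> nat set \<Rightarrow> nat set" where
  "gmul g h = (g - h) \<union> (h - g)"

datatype pauli = PI | PX | PY | PZ

text \<open>A Pauli string is a pair (lambda, w) standing for i^lambda times the tensor
  product of the letters w a over the qubits a < n (letters at a >= n are I).\<close>

type_synonym pstring = "nat \<times> (nat \<Rightarrow> pauli)"

definition valid_pstring :: "nat \<Rightarrow> pstring \<Rightarrow> bool" where
  "valid_pstring n P \<longleftrightarrow> fst P < 4 \<and> (\<forall>a. n \<le> a \<longrightarrow> snd P a = PI)"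

text \<open>States of qubits are functions from computational basis configurations
  (bit assignments nat \<Rightarrow> bool) to amplitudes. The states of the qubits in Q are
  those supported on configurations that vanish outside Q.\<close>

type_synonym state = "(nat \<Rightarrow> bool) \<Rightarrow> complex"

definition cfgs :: "nat set \<Rightarrow> (nat \<Rightarrow> bool) set" where
  "cfgs Q = {x. \<forall>a. x a \<longrightarrow> a \<in> Q}"

definition states_on :: "nat set \<Rightarrow> state set" where
  "states_on Q = {\<psi>. \<forall>x. x \<notin> cfgs Q \<longrightarrow> \<psi> x = 0}"

definition inner_on :: "nat set \<Rightarrow> state \<Rightarrow> state \<Rightarrow> complex" where
  "inner_on Q \<phi> \<psi> = (\<Sum>x\<in>cfgs Q. cnj (\<phi> x) * \<psi> x)"

text \<open>Single-qubit letter acting on basis state |b>: P|b> = letter_ph P b |flip b>.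
  X|b> = |1-b>, Z|b> = (-1)^b |b>, Y = iXZ: Y|0> = i|1>, Y|1> = -i|0>.\<close>

fun letter_ph :: "pauli \<Rightarrow> bool \<Rightarrow> complex" where
  "letter_ph PI b = 1"
| "letter_ph PX b = 1"
| "letter_ph PZ b = (if b then -1 else 1)"
| "letter_ph PY b = (if b then -\<i> else \<i>)"

definition letter_flips :: "pauli \<Rightarrow> bool" where
  "letter_flips P \<longleftrightarrow> P = PX \<or> P = PY"

definition flip_cfg :: "(nat \<Rightarrow> pauli) \<Rightarrow> (nat \<Rightarrow> bool) \<Rightarrow> (nat \<Rightarrow> bool)" where
  "flip_cfg w x = (\<lambda>a. if letter_flips (w a) then \<not> x a else x a)"

definition word_ph :: "nat \<Rightarrow> (nat \<Rightarrow> pauli) \<Rightarrow> (nat \<Rightarrow> bool) \<Rightarrow> complex" where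
  "word_ph n w x = (\<Prod>a<n. letter_ph (w a) (x a))"

text \<open>Operator of the Pauli string on n qubits: P|x> = i^lambda word_ph(x) |flip x>,
  hence (P psi)(y) = i^lambda word_ph(flip y) psi(flip y).\<close>

definition pauli_op :: "nat \<Rightarrow> pstring \<Rightarrow> state \<Rightarrow> state" where
  "pauli_op n P \<psi> = (\<lambda>y. \<i> ^ fst P * word_ph n (snd P) (flip_cfg (snd P) y)
                          * \<psi> (flip_cfg (snd P) y))"

definition identity_pstring :: pstring where
  "identity_pstring = (0, \<lambda>a. PI)"

definition minus_identity_pstring :: pstring where
  "minus_identity_pstring = (2, \<lambda>a. PI)"

definition restrict_pstring :: "nat set \<Rightarrow> pstring \<Rightarrow> pstring" where
  "restrict_pstring R P = (0, \<lambda>a. if a \<in> R then snd P a else PI)"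

end

theory Submission
  imports Defs "HOL-Library.Function_Algebras"
begin

text \<open>The commutation phases of the stabilizer group say that the flip and sign supports of its
  Pauli words form an isotropic \<open>m\<close>-dimensional subspace of \<open>\<bbbF>\<^sub>2\<^sup>n \<times> \<bbbF>\<^sub>2\<^sup>n\<close>, \<open>m = n - k\<close>.
  Gaussian elimination gives disjoint qubit sets \<open>R1\<close>, \<open>R2\<close> such that reading the flip part on
  \<open>R1\<close> and the sign part on \<open>R2\<close> is a bijection onto \<open>\<bbbF>\<^sub>2\<^sup>R\<close>, \<open>R = R1 \<union> R2\<close>; isotropy is what makes
  the sign pivots of the flip-free subgroup independent of \<open>R1\<close>. So \<open>|R| = m\<close>, the restricted
  operators \<open>U\<^sup>g\<^sub>R\<close> multiply up to phases and are pairwise distinct, and every \<open>U\<^sup>g\<^sub>R\<close> with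
  \<open>g \<noteq> e\<close> anticommutes with \<open>Z\<^sub>a\<close> for some \<open>a \<in> R1\<close> or with \<open>X\<^sub>a\<close> for some \<open>a \<in> R2\<close>. The seed
  \<open>|0\<dots>0\<rangle>\<^sub>R\<^sub>1|+\<dots>+\<rangle>\<^sub>R\<^sub>2\<close> is fixed by these letters, hence orthogonal to its image under every
  such \<open>U\<^sup>g\<^sub>R\<close>; the \<open>2\<^sup>m\<close> states \<open>U\<^sup>g\<^sub>R |e\<rangle>\<close> are therefore orthonormal and, by counting
  dimensions, a basis.\<close>

section \<open>Pauli letters and words\<close>

fun letter_mult :: "pauli \<Rightarrow> pauli \<Rightarrow> pauli" where
  "letter_mult PI q = q"
| "letter_mult p PI = p"
| "letter_mult PX PX = PI" | "letter_mult PY PY = PI" | "letter_mult PZ PZ = PI"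
| "letter_mult PX PY = PZ" | "letter_mult PY PX = PZ"
| "letter_mult PX PZ = PY" | "letter_mult PZ PX = PY"
| "letter_mult PY PZ = PX" | "letter_mult PZ PY = PX"

text \<open>The phase in \<open>p q = letter_mult_phase p q \<cdot> letter_mult p q\<close>, e.g. \<open>XY = iZ\<close>.\<close>

fun letter_mult_phase :: "pauli \<Rightarrow> pauli \<Rightarrow> complex" where
  "letter_mult_phase PX PY = \<i>" | "letter_mult_phase PY PX = -\<i>"
| "letter_mult_phase PY PZ = \<i>" | "letter_mult_phase PZ PY = -\<i>"
| "letter_mult_phase PZ PX = \<i>" | "letter_mult_phase PX PZ = -\<i>"
| "letter_mult_phase p q = 1"

definition letter_signs :: "pauli \<Rightarrow> bool" where
  "letter_signs p \<longleftrightarrow> p = PZ \<or> p = PY"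

definition letter_flip :: "pauli \<Rightarrow> bool \<Rightarrow> bool" where
  "letter_flip p b = (if letter_flips p then \<not> b else b)"

definition letters_anticommute :: "pauli \<Rightarrow> pauli \<Rightarrow> bool" where
  "letters_anticommute p q \<longleftrightarrow>
     (letter_flips p \<and> letter_signs q) \<noteq> (letter_signs p \<and> letter_flips q)"

lemma letters_anticommute_PZ [simp]: "letters_anticommute p PZ \<longleftrightarrow> letter_flips p"
  and letters_anticommute_PX [simp]: "letters_anticommute p PX \<longleftrightarrow> letter_signs p"
  by (cases p; simp add: letters_anticommute_def letter_flips_def letter_signs_def)+

lemma letter_ph_mult:
  "letter_ph p (letter_flip p b) * letter_ph q (letter_flip q (letter_flip p b))
     = letter_mult_phase p q * letter_ph (letter_mult p q) (letter_flip (letter_mult p q) b)"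
  by (cases p; cases q; cases b; simp add: letter_flip_def letter_flips_def)

lemma letter_flip_mult: "letter_flip q (letter_flip p b) = letter_flip (letter_mult p q) b"
  by (cases p; cases q; cases b; simp add: letter_flip_def letter_flips_def)

lemma letter_ph_True:
  "letter_ph p True = (if letter_signs p then -1 else 1) * letter_ph p False"
  by (cases p; simp add: letter_signs_def)

lemma letter_eqI: "letter_flips p = letter_flips q \<Longrightarrow> letter_signs p = letter_signs q \<Longrightarrow> p = q"
  by (cases p; cases q; simp add: letter_flips_def letter_signs_def)

lemma letter_ph_nonzero [simp]: "letter_ph p b \<noteq> 0"
  by (cases p; cases b; simp)

lemma cnj_letter_ph: "cnj (letter_ph p b) = letter_ph p (letter_flip p b)"
  by (cases p; cases b; simp add: letter_flip_def letter_flips_def)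

lemma letter_mult_commute: "letter_mult p q = letter_mult q p"
  by (cases p; cases q; simp)

lemma letter_mult_phase_swap:
  "letter_mult_phase p q = (if letters_anticommute p q then -1 else 1) * letter_mult_phase q p"
  by (cases p; cases q; simp add: letters_anticommute_def letter_signs_def letter_flips_def)

lemma letter_mult_phase_range: "letter_mult_phase p q \<in> {1, -1, \<i>, -\<i>}"
  by (cases p; cases q; simp)

lemma letter_mult_phase_self [simp]: "letter_mult_phase p p = 1"
  by (cases p; simp)

lemma letter_flips_mult [simp]: "letter_flips (letter_mult p q) \<longleftrightarrow> letter_flips p \<noteq> letter_flips q"
  and letter_signs_mult [simp]: "letter_signs (letter_mult p q) \<longleftrightarrow> letter_signs p \<noteq> letter_signs q"
  by (cases p; cases q; simp add: letter_flips_def letter_signs_def)+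

lemma PI_not_flips_signs [simp]: "\<not> letter_flips PI" "\<not> letter_signs PI"
  by (simp_all add: letter_flips_def letter_signs_def)

definition word_mult :: "(nat \<Rightarrow> pauli) \<Rightarrow> (nat \<Rightarrow> pauli) \<Rightarrow> (nat \<Rightarrow> pauli)" where
  "word_mult w w' = (\<lambda>a. letter_mult (w a) (w' a))"

definition word_mult_phase :: "nat \<Rightarrow> (nat \<Rightarrow> pauli) \<Rightarrow> (nat \<Rightarrow> pauli) \<Rightarrow> complex" where
  "word_mult_phase n w w' = (\<Prod>a<n. letter_mult_phase (w a) (w' a))"

definition flip_support :: "(nat \<Rightarrow> pauli) \<Rightarrow> nat set" where
  "flip_support w = {a. letter_flips (w a)}"

definition sign_support :: "(nat \<Rightarrow> pauli) \<Rightarrow> nat set" where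
  "sign_support w = {a. letter_signs (w a)}"

definition restrict_word :: "nat set \<Rightarrow> (nat \<Rightarrow> pauli) \<Rightarrow> (nat \<Rightarrow> pauli)" where
  "restrict_word R w = (\<lambda>a. if a \<in> R then w a else PI)"

lemma flip_cfg_letter_flip: "flip_cfg w x = (\<lambda>a. letter_flip (w a) (x a))"
  by (simp add: flip_cfg_def letter_flip_def)

lemma flip_cfg_word_mult: "flip_cfg w' (flip_cfg w x) = flip_cfg (word_mult w w') x"
  by (simp add: flip_cfg_letter_flip word_mult_def letter_flip_mult)

lemma flip_cfg_flip_cfg [simp]: "flip_cfg w (flip_cfg w x) = x"
  by (auto simp: flip_cfg_def)

lemma word_ph_nonzero [simp]: "word_ph n w x \<noteq> 0"
  by (simp add: word_ph_def)

lemma cnj_word_ph: "cnj (word_ph n w x) = word_ph n w (flip_cfg w x)"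
  by (simp add: word_ph_def flip_cfg_letter_flip cnj_letter_ph)

lemma word_ph_mult:
  "word_ph n w (flip_cfg w y) * word_ph n w' (flip_cfg w' (flip_cfg w y))
     = word_mult_phase n w w' * word_ph n (word_mult w w') (flip_cfg (word_mult w w') y)"
  by (simp add: word_ph_def word_mult_phase_def flip_cfg_letter_flip word_mult_def
      letter_ph_mult prod.distrib[symmetric])

lemma word_ph_upd_True:
  assumes "a < n"
  shows "word_ph n w (x(a := True)) = (if letter_signs (w a) then -1 else 1) * word_ph n w (x(a := False))"
proof -
  have split: "word_ph n w y = letter_ph (w a) (y a) * (\<Prod>c\<in>{..<n}-{a}. letter_ph (w c) (y c))" for y
    using assms by (simp add: word_ph_def prod.remove)
  have "(\<Prod>c\<in>{..<n}-{a}. letter_ph (w c) ((x(a := b)) c)) = (\<Prod>c\<in>{..<n}-{a}. letter_ph (w c) (x c))" for b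
    by (rule prod.cong) auto
  then show ?thesis
    by (simp add: split[of "x(a := True)"] split[of "x(a := False)"] letter_ph_True)
qed

lemma word_mult_commute: "word_mult w w' = word_mult w' w"
  by (simp add: word_mult_def letter_mult_commute)

lemma word_mult_phase_self [simp]: "word_mult_phase n w w = 1"
  by (simp add: word_mult_phase_def)

lemma word_mult_phase_range: "word_mult_phase n w w' \<in> {1, -1, \<i>, -\<i>}"
proof -
  have "(\<Prod>a\<in>A. letter_mult_phase (w a) (w' a)) \<in> {1, -1, \<i>, -\<i>}" if "finite A" for A :: "nat set"
    using that
  proof (induction A rule: finite_induct)
    case (insert a A)
    then show ?case using letter_mult_phase_range[of "w a" "w' a"] by auto
  qed simp
  then show ?thesis by (simp add: word_mult_phase_def)
qed

lemma word_mult_phase_swap: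
  "word_mult_phase n w w' = (-1) ^ card {a\<in>{..<n}. letters_anticommute (w a) (w' a)} * word_mult_phase n w' w"
proof -
  have "word_mult_phase n w w'
      = (\<Prod>a<n. if letters_anticommute (w a) (w' a) then -1 else 1) * word_mult_phase n w' w"
    unfolding word_mult_phase_def by (subst letter_mult_phase_swap) (simp add: prod.distrib)
  then show ?thesis by (simp add: prod.If_cases Int_def)
qed

lemma word_mult_phase_commute_imp_even:
  assumes "word_mult_phase n w w' = word_mult_phase n w' w"
  shows "even (card {a\<in>{..<n}. letters_anticommute (w a) (w' a)})"
proof -
  have "word_mult_phase n w' w \<noteq> 0"
    using word_mult_phase_range[of n w' w] by auto
  then have "(-1 :: complex) ^ card {a\<in>{..<n}. letters_anticommute (w a) (w' a)} = 1"
    using word_mult_phase_swap[of n w w'] assms by simp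
  then show ?thesis by (metis neg_one_odd_power one_neq_neg_one)
qed

lemma flip_support_word_mult: "flip_support (word_mult w w') = sym_diff (flip_support w) (flip_support w')"
  and sign_support_word_mult: "sign_support (word_mult w w') = sym_diff (sign_support w) (sign_support w')"
  by (auto simp: flip_support_def sign_support_def word_mult_def)

lemma supports_below:
  assumes "\<And>a. n \<le> a \<Longrightarrow> w a = PI"
  shows "flip_support w \<subseteq> {..<n}" and "sign_support w \<subseteq> {..<n}"
proof -
  have "a < n" if "letter_flips (w a) \<or> letter_signs (w a)" for a
    using that assms[of a] by (cases "n \<le> a") auto
  then show "flip_support w \<subseteq> {..<n}" and "sign_support w \<subseteq> {..<n}"
    by (auto simp: flip_support_def sign_support_def)
qed

lemma anticommuting_sites:
  assumes "\<And>a. n \<le> a \<Longrightarrow> w a = PI"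
  shows "{a\<in>{..<n}. letters_anticommute (w a) (w' a)}
    = sym_diff (flip_support w \<inter> sign_support w') (sign_support w \<inter> flip_support w')"
proof -
  have "flip_support w \<subseteq> {..<n}" "sign_support w \<subseteq> {..<n}"
    using supports_below[of n w, OF assms] by blast+
  then show ?thesis
    unfolding flip_support_def sign_support_def letters_anticommute_def by auto
qed

lemma restrict_word_mult: "restrict_word R (word_mult w w') = word_mult (restrict_word R w) (restrict_word R w')"
  by (simp add: restrict_word_def word_mult_def fun_eq_iff)

section \<open>Pauli operators\<close>

lemma pauli_op_prefactor: "pauli_op n (l, w) \<psi> = (\<lambda>y. \<i> ^ l * pauli_op n (0, w) \<psi> y)"
  by (simp add: pauli_op_def mult.assoc)

lemma pauli_op_scale: "pauli_op n P (\<lambda>y. c * \<psi> y) = (\<lambda>y. c * pauli_op n P \<psi> y)"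
  by (auto simp: pauli_op_def)

lemma pauli_op_PI [simp]: "pauli_op n (0, \<lambda>_. PI) \<psi> = \<psi>"
  by (simp add: pauli_op_def word_ph_def flip_cfg_def letter_flips_def)

lemma pauli_op_word_mult:
  "pauli_op n (0, w) (pauli_op n (0, w') \<psi>) = (\<lambda>y. word_mult_phase n w w' * pauli_op n (0, word_mult w w') \<psi> y)"
proof
  fix y
  have "pauli_op n (0, w) (pauli_op n (0, w') \<psi>) y
      = (word_ph n w (flip_cfg w y) * word_ph n w' (flip_cfg w' (flip_cfg w y)))
          * \<psi> (flip_cfg w' (flip_cfg w y))"
    by (simp add: pauli_op_def mult.assoc)
  also have "\<dots> = word_mult_phase n w w' * pauli_op n (0, word_mult w w') \<psi> y"
    unfolding word_ph_mult by (simp add: pauli_op_def flip_cfg_word_mult)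
  finally show "pauli_op n (0, w) (pauli_op n (0, w') \<psi>) y
      = word_mult_phase n w w' * pauli_op n (0, word_mult w w') \<psi> y" .
qed

lemma pauli_op_comp:
  "pauli_op n (l, w) \<circ> pauli_op n (l', w')
     = (\<lambda>\<psi> y. (\<i> ^ l * \<i> ^ l' * word_mult_phase n w w') * pauli_op n (0, word_mult w w') \<psi> y)"
  by (simp add: fun_eq_iff pauli_op_prefactor[of n l] pauli_op_prefactor[of n l'] pauli_op_scale
      pauli_op_word_mult mult_ac)

definition basis_state :: "(nat \<Rightarrow> bool) \<Rightarrow> state" where
  "basis_state x = (\<lambda>y. if y = x then 1 else 0)"

lemma pauli_op_basis_state:
  "pauli_op n (0, w) (basis_state x) = (\<lambda>y. word_ph n w x * basis_state (flip_cfg w x) y)"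
proof
  fix y
  have "flip_cfg w y = x \<longleftrightarrow> y = flip_cfg w x"
    by (metis flip_cfg_flip_cfg)
  then show "pauli_op n (0, w) (basis_state x) y = word_ph n w x * basis_state (flip_cfg w x) y"
    by (auto simp: pauli_op_def basis_state_def)
qed

text \<open>On basis states both sides flip the same configuration with the same phase; the phase ratio
  between \<open>x(a := True)\<close> and \<open>x(a := False)\<close> is the sign of the letter at \<open>a\<close>.\<close>

lemma scaled_pauli_op_eq_imp_eq:
  assumes w: "\<And>a. n \<le> a \<Longrightarrow> w a = PI" and w': "\<And>a. n \<le> a \<Longrightarrow> w' a = PI"
    and "\<alpha> \<noteq> 0"
    and eq: "\<And>\<psi>. (\<lambda>y. \<alpha> * pauli_op n (0, w) \<psi> y) = (\<lambda>y. \<beta> * pauli_op n (0, w') \<psi> y)"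
  shows "w = w' \<and> \<alpha> = \<beta>"
proof -
  have basis_eq: "\<alpha> * word_ph n w x * basis_state (flip_cfg w x) y
      = \<beta> * word_ph n w' x * basis_state (flip_cfg w' x) y" for x y
    using fun_cong[OF eq[of "basis_state x"], of y] by (simp add: pauli_op_basis_state mult.assoc)
  have flips: "flip_cfg w x = flip_cfg w' x" for x
    using basis_eq[of x "flip_cfg w x"] \<open>\<alpha> \<noteq> 0\<close> by (auto simp: basis_state_def split: if_splits)
  have phases: "\<alpha> * word_ph n w x = \<beta> * word_ph n w' x" for x
    using basis_eq[of x "flip_cfg w x"] flips[of x] by (simp add: basis_state_def)
  have "w a = w' a" for a
  proof (cases "a < n")
    case True
    have "letter_flips (w a) = letter_flips (w' a)"
      using fun_cong[OF flips[of "\<lambda>_. False"], of a] by (simp add: flip_cfg_def split: if_splits)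
    moreover have "letter_signs (w a) = letter_signs (w' a)"
    proof -
      let ?x = "(\<lambda>_. False) :: nat \<Rightarrow> bool"
      have x: "?x(a := False) = ?x" by auto
      have "(if letter_signs (w a) then -1 else 1) * (\<alpha> * word_ph n w ?x)
          = (if letter_signs (w' a) then -1 else 1) * (\<beta> * word_ph n w' ?x)"
        using phases[of "?x(a := True)"] by (simp add: word_ph_upd_True[OF True] x mult_ac)
      also have "\<beta> * word_ph n w' ?x = \<alpha> * word_ph n w ?x"
        using phases[of ?x] by simp
      finally show ?thesis using \<open>\<alpha> \<noteq> 0\<close> by (auto split: if_splits)
    qed
    ultimately show ?thesis by (rule letter_eqI)
  next
    case False
    then show ?thesis using w w' by simp
  qed
  then have "w = w'" ..
  moreover have "\<alpha> = \<beta>"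
    using phases[of "\<lambda>_. False"] \<open>w = w'\<close> by simp
  ultimately show ?thesis ..
qed

lemma pauli_op_comp_eq_imp:
  assumes "valid_pstring n P" "valid_pstring n Q" "valid_pstring n S"
    and "pauli_op n P \<circ> pauli_op n Q = pauli_op n S"
  shows "word_mult (snd P) (snd Q) = snd S"
    and "\<i> ^ fst P * \<i> ^ fst Q * word_mult_phase n (snd P) (snd Q) = \<i> ^ fst S"
proof -
  obtain l w l' w' l'' w'' where PQS: "P = (l, w)" "Q = (l', w')" "S = (l'', w'')"
    by (cases P, cases Q, cases S)
  have "(\<lambda>y. (\<i> ^ l * \<i> ^ l' * word_mult_phase n w w') * pauli_op n (0, word_mult w w') \<psi> y)
      = (\<lambda>y. \<i> ^ l'' * pauli_op n (0, w'') \<psi> y)" for \<psi>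
    using fun_cong[OF assms(4), of \<psi>] by (simp add: PQS pauli_op_comp pauli_op_prefactor[of n l''])
  moreover have "\<i> ^ l * \<i> ^ l' * word_mult_phase n w w' \<noteq> 0"
    using word_mult_phase_range[of n w w'] by auto
  ultimately have "word_mult w w' = w'' \<and> \<i> ^ l * \<i> ^ l' * word_mult_phase n w w' = \<i> ^ l''"
    using assms(1-3) by (intro scaled_pauli_op_eq_imp_eq) (auto simp: PQS valid_pstring_def word_mult_def)
  then show "word_mult (snd P) (snd Q) = snd S"
    and "\<i> ^ fst P * \<i> ^ fst Q * word_mult_phase n (snd P) (snd Q) = \<i> ^ fst S"
    by (simp_all add: PQS)
qed

lemma pauli_op_restrict_pstring: "pauli_op n (restrict_pstring R P) = pauli_op n (0, restrict_word R (snd P))"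
  by (simp add: restrict_pstring_def restrict_word_def)

lemma word_ph_single:
  assumes "a < n"
  shows "word_ph n ((\<lambda>_. PI)(a := p)) y = letter_ph p (y a)"
proof -
  have "(\<Prod>c\<in>{..<n}-{a}. letter_ph (((\<lambda>_. PI)(a := p)) c) (y c)) = 1"
    by (rule prod.neutral) auto
  then show ?thesis using assms by (simp add: word_ph_def prod.remove)
qed

lemma flip_cfg_single: "flip_cfg ((\<lambda>_. PI)(a := p)) y = (if letter_flips p then y(a := \<not> y a) else y)"
  by (auto simp: flip_cfg_def letter_flips_def)

lemma pauli_op_single_anticommute:
  assumes "a < n" and "letters_anticommute (w a) p"
  shows "pauli_op n (0, w) (pauli_op n (0, (\<lambda>_. PI)(a := p)) \<phi>)
    = (\<lambda>y. - pauli_op n (0, (\<lambda>_. PI)(a := p)) (pauli_op n (0, w) \<phi>) y)"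
proof -
  let ?v = "(\<lambda>_. PI)(a := p)"
  have "{b\<in>{..<n}. letters_anticommute (w b) (?v b)} = {a}"
    using assms by (auto simp: letters_anticommute_def)
  then have "word_mult_phase n w ?v = - word_mult_phase n ?v w"
    using word_mult_phase_swap[of n w ?v] by simp
  then show ?thesis by (simp add: pauli_op_word_mult word_mult_commute[of w])
qed

section \<open>Information sets of binary linear codes\<close>

text \<open>A family of subsets of \<open>Q\<close> closed under symmetric difference is a binary linear code;
  \<open>R\<close> is an information set for it, found by eliminating one coordinate at a time.\<close>

lemma information_set_insert:
  assumes closed: "\<And>s t. s \<in> S \<Longrightarrow> t \<in> S \<Longrightarrow> sym_diff s t \<in> S"
    and "{q} \<in> S" and "q \<notin> R"
    and bij: "bij_betw (\<lambda>s. s \<inter> R) ((\<lambda>s. s - {q}) ` S) (Pow R)"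
  shows "bij_betw (\<lambda>s. s \<inter> insert q R) S (Pow (insert q R))"
proof -
  have "inj_on (\<lambda>s. s \<inter> insert q R) S"
  proof (rule inj_onI)
    fix s t assume "s \<in> S" "t \<in> S" and eq: "s \<inter> insert q R = t \<inter> insert q R"
    then have "(s - {q}) \<inter> R = (t - {q}) \<inter> R" by blast
    then have "s - {q} = t - {q}"
      using inj_onD[OF bij_betw_imp_inj_on[OF bij]] \<open>s \<in> S\<close> \<open>t \<in> S\<close> by blast
    then show "s = t" using eq by blast
  qed
  moreover have "A \<in> (\<lambda>s. s \<inter> insert q R) ` S" if A: "A \<subseteq> insert q R" for A
  proof -
    have "A - {q} \<in> (\<lambda>s. s \<inter> R) ` (\<lambda>s. s - {q}) ` S" using bij A by (auto simp: bij_betw_def)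
    then obtain s where s: "s \<in> S" "(s - {q}) \<inter> R = A - {q}" by auto
    show ?thesis
    proof (cases "q \<in> s \<longleftrightarrow> q \<in> A")
      case True
      then have "s \<inter> insert q R = A" using s A \<open>q \<notin> R\<close> by blast
      then show ?thesis using s(1) by blast
    next
      case False
      then have "sym_diff s {q} \<inter> insert q R = A" using s A \<open>q \<notin> R\<close> by auto
      then show ?thesis using closed[OF s(1) \<open>{q} \<in> S\<close>] by blast
    qed
  qed
  ultimately show ?thesis by (auto simp: bij_betw_def)
qed

lemma subspace_information_set:
  assumes "finite Q" and "S \<subseteq> Pow Q" and "{} \<in> S"
    and "\<And>s t. s \<in> S \<Longrightarrow> t \<in> S \<Longrightarrow> sym_diff s t \<in> S"
  shows "\<exists>R\<subseteq>Q. bij_betw (\<lambda>s. s \<inter> R) S (Pow R)"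
  using assms
proof (induction Q arbitrary: S rule: finite_induct)
  case empty
  then have "S = {{}}" by auto
  then show ?case by (auto simp: bij_betw_def)
next
  case (insert q Q)
  define T where "T = (\<lambda>s. s - {q}) ` S"
  have T_sub: "T \<subseteq> Pow Q" using insert.prems(1) insert.hyps(2) by (auto simp: T_def)
  have T_empty: "{} \<in> T" using insert.prems(2) by (force simp: T_def)
  have T_closed: "sym_diff s t \<in> T" if st: "s \<in> T" "t \<in> T" for s t
  proof -
    obtain s' t' where "s' \<in> S" "t' \<in> S" "s = s' - {q}" "t = t' - {q}"
      using st by (auto simp: T_def)
    then have "sym_diff s t = sym_diff s' t' - {q}" and "sym_diff s' t' \<in> S"
      using insert.prems(3) by auto
    then show ?thesis by (auto simp: T_def)
  qed
  obtain R where R: "R \<subseteq> Q" "bij_betw (\<lambda>s. s \<inter> R) T (Pow R)"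
    using insert.IH[OF T_sub T_empty T_closed] by blast
  have "q \<notin> R" using R(1) insert.hyps(2) by auto
  show ?case
  proof (cases "inj_on (\<lambda>s. s - {q}) S")
    case True
    then have "bij_betw (\<lambda>s. s - {q}) S T" by (simp add: bij_betw_def T_def)
    then have "bij_betw ((\<lambda>s. s \<inter> R) \<circ> (\<lambda>s. s - {q})) S (Pow R)"
      using R(2) by (rule bij_betw_trans)
    moreover have "(\<lambda>s. s \<inter> R) \<circ> (\<lambda>s. s - {q}) = (\<lambda>s. s \<inter> R)" using \<open>q \<notin> R\<close> by auto
    ultimately show ?thesis using R(1) by auto
  next
    case False
    then obtain s t where "s \<in> S" "t \<in> S" "s \<noteq> t" "s - {q} = t - {q}"
      by (auto simp: inj_on_def)
    then have "sym_diff s t = {q}" by auto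
    then have "{q} \<in> S" using insert.prems(3) \<open>s \<in> S\<close> \<open>t \<in> S\<close> by metis
    then have "bij_betw (\<lambda>s. s \<inter> insert q R) S (Pow (insert q R))"
      using information_set_insert[OF insert.prems(3)] \<open>q \<notin> R\<close> R(2) by (simp add: T_def)
    then show ?thesis using R(1) by blast
  qed
qed

lemma hom_information_set:
  assumes "finite Q" and "{} \<in> G" and G_closed: "\<And>g h. g \<in> G \<Longrightarrow> h \<in> G \<Longrightarrow> sym_diff g h \<in> G"
    and "\<And>g. g \<in> G \<Longrightarrow> f g \<subseteq> Q"
    and f_hom: "\<And>g h. g \<in> G \<Longrightarrow> h \<in> G \<Longrightarrow> f (sym_diff g h) = sym_diff (f g) (f h)"
  obtains R where "R \<subseteq> Q"
    and "\<And>g h. g \<in> G \<Longrightarrow> h \<in> G \<Longrightarrow> f g \<inter> R = f h \<inter> R \<Longrightarrow> f g = f h"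
    and "\<And>A. A \<subseteq> R \<Longrightarrow> \<exists>g\<in>G. f g \<inter> R = A"
proof -
  have "f {} = {}" using f_hom[OF \<open>{} \<in> G\<close> \<open>{} \<in> G\<close>] by simp
  then have "{} \<in> f ` G" using \<open>{} \<in> G\<close> by force
  moreover have "sym_diff s t \<in> f ` G" if "s \<in> f ` G" "t \<in> f ` G" for s t
  proof -
    obtain g h where "g \<in> G" "h \<in> G" "s = f g" "t = f h" using \<open>s \<in> f ` G\<close> \<open>t \<in> f ` G\<close> by blast
    then have "sym_diff s t = f (sym_diff g h)" and "sym_diff g h \<in> G" by (simp_all add: f_hom G_closed)
    then show ?thesis by blast
  qed
  moreover have "f ` G \<subseteq> Pow Q" using assms(4) by blast
  ultimately obtain R where "R \<subseteq> Q" and bij: "bij_betw (\<lambda>s. s \<inter> R) (f ` G) (Pow R)"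
    using subspace_information_set[OF \<open>finite Q\<close>, of "f ` G"] by blast
  show ?thesis
  proof (rule that[OF \<open>R \<subseteq> Q\<close>])
    show "f g = f h" if "g \<in> G" "h \<in> G" "f g \<inter> R = f h \<inter> R" for g h
      using inj_onD[OF bij_betw_imp_inj_on[OF bij] that(3)] that(1,2) by blast
    show "\<exists>g\<in>G. f g \<inter> R = A" if "A \<subseteq> R" for A
    proof -
      have "A \<in> (\<lambda>s. s \<inter> R) ` f ` G" using that bij_betw_imp_surj_on[OF bij] by simp
      then show ?thesis by auto
    qed
  qed
qed

text \<open>In the application \<open>X g\<close> and \<open>Z g\<close> are the flip and sign supports of the Pauli word of \<open>g\<close>;
  isotropy is the parity condition for pairwise commutation.\<close>

locale isotropic_embedding =
  fixes Q :: "'a set" and G :: "'b set set" and X Z :: "'b set \<Rightarrow> 'a set"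
  assumes finite_Q: "finite Q" and empty_in_G: "{} \<in> G"
    and G_closed: "\<And>g h. g \<in> G \<Longrightarrow> h \<in> G \<Longrightarrow> sym_diff g h \<in> G"
    and X_sub: "\<And>g. g \<in> G \<Longrightarrow> X g \<subseteq> Q" and Z_sub: "\<And>g. g \<in> G \<Longrightarrow> Z g \<subseteq> Q"
    and X_hom: "\<And>g h. g \<in> G \<Longrightarrow> h \<in> G \<Longrightarrow> X (sym_diff g h) = sym_diff (X g) (X h)"
    and Z_hom: "\<And>g h. g \<in> G \<Longrightarrow> h \<in> G \<Longrightarrow> Z (sym_diff g h) = sym_diff (Z g) (Z h)"
    and faithful: "\<And>g. g \<in> G \<Longrightarrow> X g = {} \<Longrightarrow> Z g = {} \<Longrightarrow> g = {}"
    and isotropic: "\<And>g h. g \<in> G \<Longrightarrow> h \<in> G \<Longrightarrow> even (card (sym_diff (X g \<inter> Z h) (Z g \<inter> X h)))"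
begin

lemma X_empty: "X {} = {}" and Z_empty: "Z {} = {}"
  using X_hom[OF empty_in_G empty_in_G] Z_hom[OF empty_in_G empty_in_G] by simp_all

lemma X_free_trivial:
  assumes X_onto: "\<And>A. A \<subseteq> R \<Longrightarrow> \<exists>h\<in>G. X h \<inter> R = A"
    and "g \<in> G" "X g = {}" "Z g \<subseteq> R"
  shows "g = {}"
proof (rule ccontr)
  assume "g \<noteq> {}"
  then obtain a where "a \<in> Z g" using faithful \<open>g \<in> G\<close> \<open>X g = {}\<close> by blast
  then obtain h where "h \<in> G" "X h \<inter> R = {a}" using X_onto[of "{a}"] \<open>Z g \<subseteq> R\<close> by blast
  then have "sym_diff (X g \<inter> Z h) (Z g \<inter> X h) = {a}"
    using \<open>X g = {}\<close> \<open>Z g \<subseteq> R\<close> \<open>a \<in> Z g\<close> by blast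
  then show False using isotropic[OF \<open>g \<in> G\<close> \<open>h \<in> G\<close>] by simp
qed

lemma flip_free_information_set:
  assumes X_onto: "\<And>A. A \<subseteq> R1 \<Longrightarrow> \<exists>h\<in>G. X h \<inter> R1 = A"
  obtains R2 where "R2 \<subseteq> Q - R1"
    and "\<And>k. k \<in> G \<Longrightarrow> X k = {} \<Longrightarrow> Z k \<inter> R2 = {} \<Longrightarrow> k = {}"
    and "\<And>A. A \<subseteq> R2 \<Longrightarrow> \<exists>k\<in>G. X k = {} \<and> Z k \<inter> R2 = A"
proof -
  define K where "K = {g\<in>G. X g = {}}"
  have "{} \<in> K" using X_empty empty_in_G by (simp add: K_def)
  have K_closed: "sym_diff g h \<in> K" if "g \<in> K" "h \<in> K" for g h
    using that G_closed X_hom by (simp add: K_def)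
  have K_sub: "Z g - R1 \<subseteq> Q - R1" if "g \<in> K" for g
    using that Z_sub by (auto simp: K_def)
  have K_hom: "Z (sym_diff g h) - R1 = sym_diff (Z g - R1) (Z h - R1)" if "g \<in> K" "h \<in> K" for g h
  proof -
    have "Z (sym_diff g h) = sym_diff (Z g) (Z h)" using that Z_hom by (simp add: K_def)
    then show ?thesis by blast
  qed
  obtain R2 where "R2 \<subseteq> Q - R1"
    and Z_inj: "\<And>g h. g \<in> K \<Longrightarrow> h \<in> K \<Longrightarrow> (Z g - R1) \<inter> R2 = (Z h - R1) \<inter> R2 \<Longrightarrow> Z g - R1 = Z h - R1"
    and Z_onto: "\<And>A. A \<subseteq> R2 \<Longrightarrow> \<exists>g\<in>K. (Z g - R1) \<inter> R2 = A"
    using hom_information_set[OF finite_Diff[OF finite_Q] \<open>{} \<in> K\<close> K_closed K_sub K_hom] by blast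
  have R2_Z: "(Z g - R1) \<inter> R2 = Z g \<inter> R2" for g
    using \<open>R2 \<subseteq> Q - R1\<close> by blast
  show ?thesis
  proof (rule that[OF \<open>R2 \<subseteq> Q - R1\<close>])
    show "k = {}" if "k \<in> G" "X k = {}" "Z k \<inter> R2 = {}" for k
    proof -
      have "Z k - R1 = Z {} - R1"
        using that Z_inj[of k "{}"] \<open>{} \<in> K\<close> Z_empty by (simp add: R2_Z K_def)
      then have "Z k \<subseteq> R1" using Z_empty by blast
      then show "k = {}" using X_free_trivial[OF X_onto] that by blast
    qed
    show "\<exists>k\<in>G. X k = {} \<and> Z k \<inter> R2 = A" if "A \<subseteq> R2" for A
      using Z_onto[OF that] by (auto simp: R2_Z K_def)
  qed
qed

text \<open>\<open>R1\<close> holds pivots of the flip parts, \<open>R2\<close> pivots (outside \<open>R1\<close>) of the sign parts of the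
  flip-free subgroup; isotropy makes the latter independent of \<open>R1\<close>.\<close>

lemma information_sets:
  obtains R1 R2 where "R1 \<inter> R2 = {}" and "R1 \<union> R2 \<subseteq> Q"
    and "bij_betw (\<lambda>g. X g \<inter> R1 \<union> Z g \<inter> R2) G (Pow (R1 \<union> R2))"
proof -
  obtain R1 where "R1 \<subseteq> Q" and X_inj: "\<And>g h. g \<in> G \<Longrightarrow> h \<in> G \<Longrightarrow> X g \<inter> R1 = X h \<inter> R1 \<Longrightarrow> X g = X h"
    and X_onto: "\<And>A. A \<subseteq> R1 \<Longrightarrow> \<exists>g\<in>G. X g \<inter> R1 = A"
    using hom_information_set[OF finite_Q empty_in_G G_closed X_sub X_hom] by blast
  obtain R2 where "R2 \<subseteq> Q - R1"
    and kernel: "\<And>k. k \<in> G \<Longrightarrow> X k = {} \<Longrightarrow> Z k \<inter> R2 = {} \<Longrightarrow> k = {}"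
    and Z_onto: "\<And>A. A \<subseteq> R2 \<Longrightarrow> \<exists>k\<in>G. X k = {} \<and> Z k \<inter> R2 = A"
    using flip_free_information_set[OF X_onto] by blast
  define syndrome where "syndrome g = X g \<inter> R1 \<union> Z g \<inter> R2" for g
  have syndrome_R1: "syndrome g \<inter> R1 = X g \<inter> R1" and syndrome_R2: "syndrome g \<inter> R2 = Z g \<inter> R2" for g
    using \<open>R2 \<subseteq> Q - R1\<close> by (auto simp: syndrome_def)
  have "inj_on syndrome G"
  proof (rule inj_onI)
    fix g h assume "g \<in> G" "h \<in> G" and eq: "syndrome g = syndrome h"
    then have "X g = X h" using X_inj syndrome_R1 by metis
    then have "X (sym_diff g h) = {}" using X_hom[OF \<open>g \<in> G\<close> \<open>h \<in> G\<close>] by simp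
    moreover have "Z (sym_diff g h) \<inter> R2 = {}"
      using eq syndrome_R2[of g] syndrome_R2[of h] Z_hom[OF \<open>g \<in> G\<close> \<open>h \<in> G\<close>] by blast
    ultimately show "g = h" using kernel G_closed[OF \<open>g \<in> G\<close> \<open>h \<in> G\<close>] by blast
  qed
  moreover have "A \<in> syndrome ` G" if A: "A \<subseteq> R1 \<union> R2" for A
  proof -
    obtain g where g: "g \<in> G" "X g \<inter> R1 = A \<inter> R1" using X_onto[of "A \<inter> R1"] by blast
    obtain k where k: "k \<in> G" "X k = {}" "Z k \<inter> R2 = sym_diff (Z g \<inter> R2) (A \<inter> R2)"
      using Z_onto[of "sym_diff (Z g \<inter> R2) (A \<inter> R2)"] by blast
    then have "X (sym_diff g k) \<inter> R1 = A \<inter> R1" and "Z (sym_diff g k) \<inter> R2 = A \<inter> R2"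
      using g X_hom[OF \<open>g \<in> G\<close> \<open>k \<in> G\<close>] Z_hom[OF \<open>g \<in> G\<close> \<open>k \<in> G\<close>] by auto
    then have "syndrome (sym_diff g k) = A" using A by (auto simp: syndrome_def)
    then show ?thesis using G_closed[OF \<open>g \<in> G\<close> \<open>k \<in> G\<close>] by blast
  qed
  ultimately have "bij_betw syndrome G (Pow (R1 \<union> R2))"
    by (auto simp: bij_betw_def syndrome_def)
  then show ?thesis
    using that \<open>R1 \<subseteq> Q\<close> \<open>R2 \<subseteq> Q - R1\<close> unfolding syndrome_def by blast
qed

end

section \<open>States on a set of qubits\<close>

lemma bij_betw_cfgs_Pow: "bij_betw (\<lambda>x. {a. x a}) (cfgs R) (Pow R)"
  by (rule bij_betw_byWitness[where f' = "\<lambda>A a. a \<in> A"]) (auto simp: cfgs_def)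

lemma finite_cfgs: "finite R \<Longrightarrow> finite (cfgs R)"
  by (simp add: bij_betw_finite[OF bij_betw_cfgs_Pow])

lemma card_cfgs: "finite R \<Longrightarrow> card (cfgs R) = 2 ^ card R"
  using bij_betw_same_card[OF bij_betw_cfgs_Pow] by (simp add: card_Pow)

lemma flip_cfg_in_cfgs_iff:
  assumes "\<And>a. a \<notin> R \<Longrightarrow> w a = PI"
  shows "flip_cfg w x \<in> cfgs R \<longleftrightarrow> x \<in> cfgs R"
proof -
  have fixed: "flip_cfg w x a = x a" if "a \<notin> R" for a
    using assms[OF that] by (simp add: flip_cfg_def letter_flips_def)
  show ?thesis unfolding cfgs_def mem_Collect_eq
    using fixed by (metis (full_types))
qed

lemma pauli_op_states_on:
  assumes "\<And>a. a \<notin> R \<Longrightarrow> w a = PI" and "\<psi> \<in> states_on R"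
  shows "pauli_op n (l, w) \<psi> \<in> states_on R"
  using assms flip_cfg_in_cfgs_iff[of R w] by (simp add: states_on_def pauli_op_def)

lemma inner_on_pauli_op_adjoint:
  assumes "\<And>a. a \<notin> R \<Longrightarrow> w a = PI"
  shows "inner_on R (pauli_op n (0, w) \<phi>) \<psi> = inner_on R \<phi> (pauli_op n (0, w) \<psi>)"
proof -
  let ?f = "flip_cfg w"
  have bij: "bij_betw ?f (cfgs R) (cfgs R)"
    by (rule bij_betw_byWitness[where f' = ?f]) (auto simp: flip_cfg_in_cfgs_iff[OF assms])
  have "inner_on R (pauli_op n (0, w) \<phi>) \<psi> = (\<Sum>x\<in>cfgs R. cnj (word_ph n w (?f x) * \<phi> (?f x)) * \<psi> x)"
    by (simp add: inner_on_def pauli_op_def)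
  also have "\<dots> = (\<Sum>y\<in>cfgs R. cnj (word_ph n w (?f (?f y)) * \<phi> (?f (?f y))) * \<psi> (?f y))"
    using sum.reindex_bij_betw[OF bij, of "\<lambda>x. cnj (word_ph n w (?f x) * \<phi> (?f x)) * \<psi> x"] by simp
  also have "\<dots> = inner_on R \<phi> (pauli_op n (0, w) \<psi>)"
    by (simp add: inner_on_def pauli_op_def cnj_word_ph mult_ac)
  finally show ?thesis .
qed

lemma inner_on_scale: "inner_on R \<phi> (\<lambda>y. c * \<psi> y) = c * inner_on R \<phi> \<psi>"
  by (simp add: inner_on_def sum_distrib_left mult_ac)

lemma sum_apply: "(\<Sum>i\<in>A. f i) x = (\<Sum>i\<in>A. f i x)"
  by (induction A rule: infinite_finite_induct) auto

lemma inner_on_sum: "inner_on R \<phi> (\<Sum>i\<in>A. f i) = (\<Sum>i\<in>A. inner_on R \<phi> (f i))"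
  by (simp add: inner_on_def sum_apply sum_distrib_left sum.swap[of _ A])

lemma inner_on_zero [simp]: "inner_on R \<phi> 0 = 0"
  by (simp add: inner_on_def)

interpretation state_space: vector_space "\<lambda>c (\<phi> :: state) x. c * \<phi> x"
  by unfold_locales (auto simp: fun_eq_iff algebra_simps)

lemma orthonormal_independent:
  assumes "finite B" and orthonormal: "\<And>u v. u \<in> B \<Longrightarrow> v \<in> B \<Longrightarrow> inner_on R v u = (if u = v then 1 else 0)"
  shows "state_space.independent B"
proof (rule state_space.independent_if_scalars_zero[OF \<open>finite B\<close>])
  fix f v assume comb: "(\<Sum>u\<in>B. (\<lambda>x. f u * u x)) = 0" and "v \<in> B"
  have "0 = inner_on R v (\<Sum>u\<in>B. (\<lambda>x. f u * u x))" by (simp add: comb)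
  also have "\<dots> = (\<Sum>u\<in>B. if u = v then f u else 0)"
    unfolding inner_on_sum inner_on_scale using \<open>v \<in> B\<close> orthonormal by (intro sum.cong) auto
  also have "\<dots> = f v" using \<open>finite B\<close> \<open>v \<in> B\<close> by simp
  finally show "f v = 0" by simp
qed

lemma states_on_in_span_basis_states:
  assumes "finite R" and "\<phi> \<in> states_on R"
  shows "\<phi> \<in> state_space.span (basis_state ` cfgs R)"
proof -
  have "\<phi> = (\<Sum>x\<in>cfgs R. (\<lambda>y. \<phi> x * basis_state x y))"
  proof
    fix y
    show "\<phi> y = (\<Sum>x\<in>cfgs R. (\<lambda>y. \<phi> x * basis_state x y)) y"
      using assms finite_cfgs[OF \<open>finite R\<close>]
      by (simp add: sum_apply basis_state_def states_on_def if_distrib sum.delta' cong: if_cong)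
  qed
  also have "\<dots> \<in> state_space.span (basis_state ` cfgs R)"
    by (intro state_space.span_sum state_space.span_scale state_space.span_base) auto
  finally show ?thesis .
qed

text \<open>Dimension count: \<open>states_on R\<close> is spanned by the \<open>2 ^ card R\<close> basis states of \<open>cfgs R\<close>.\<close>

lemma orthonormal_family_spans:
  fixes ket :: "'i \<Rightarrow> state"
  assumes "finite R" and "finite I" and card_I: "card I = 2 ^ card R"
    and kets: "\<And>i. i \<in> I \<Longrightarrow> ket i \<in> states_on R"
    and orthonormal: "\<And>i j. i \<in> I \<Longrightarrow> j \<in> I \<Longrightarrow> inner_on R (ket i) (ket j) = (if i = j then 1 else 0)"
    and "\<psi> \<in> states_on R"
  shows "\<exists>a. \<psi> = (\<lambda>x. \<Sum>i\<in>I. a i * ket i x)"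
proof -
  have "inj_on ket I"
    by (rule inj_onI) (metis orthonormal zero_neq_one)
  define B where "B = ket ` I"
  have "finite B" and card_B: "card B = 2 ^ card R"
    using \<open>finite I\<close> \<open>inj_on ket I\<close> card_I by (simp_all add: B_def card_image)
  have "state_space.independent B"
    using \<open>finite B\<close> orthonormal \<open>inj_on ket I\<close>
    by (intro orthonormal_independent[of B R]) (auto simp: B_def inj_on_def)
  define D where "D = basis_state ` cfgs R"
  have "finite D" using finite_cfgs[OF \<open>finite R\<close>] by (simp add: D_def)
  have card_D: "card D \<le> 2 ^ card R"
    unfolding D_def using card_image_le[OF finite_cfgs[OF \<open>finite R\<close>]] card_cfgs[OF \<open>finite R\<close>] by metis
  have "\<psi> \<in> state_space.span B"
  proof (rule ccontr)
    assume "\<psi> \<notin> state_space.span B"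
    then have "state_space.independent (insert \<psi> B)" and "\<psi> \<notin> B"
      using state_space.independent_insertI[OF _ \<open>state_space.independent B\<close>] state_space.span_base by auto
    moreover have "insert \<psi> B \<subseteq> state_space.span D"
      using states_on_in_span_basis_states[OF \<open>finite R\<close>] \<open>\<psi> \<in> states_on R\<close> kets by (auto simp: B_def D_def)
    ultimately have "card (insert \<psi> B) \<le> card D" using state_space.independent_span_bound[OF \<open>finite D\<close>] by blast
    then show False using card_D card_B \<open>finite B\<close> \<open>\<psi> \<notin> B\<close> by simp
  qed
  then obtain u where "\<psi> = (\<Sum>v\<in>B. (\<lambda>x. u v * v x))" using state_space.span_finite[OF \<open>finite B\<close>] by auto
  also have "\<dots> = (\<Sum>i\<in>I. (\<lambda>x. u (ket i) * ket i x))"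
    unfolding B_def using sum.reindex[OF \<open>inj_on ket I\<close>] by simp
  finally show ?thesis by (auto simp: fun_eq_iff sum_apply)
qed

text \<open>A state fixed by a Pauli operator \<open>L\<close> that anticommutes with \<open>P\<close> has
  \<open>\<langle>e, P e\<rangle> = \<langle>e, P L e\<rangle> = - \<langle>L e, P e\<rangle> = - \<langle>e, P e\<rangle>\<close>.\<close>

lemma inner_on_anticommuting_fixed:
  assumes "\<And>a. a \<notin> R \<Longrightarrow> v a = PI" and fixed: "pauli_op n (0, v) e = e"
    and anti: "pauli_op n (0, w) (pauli_op n (0, v) e) = (\<lambda>y. - pauli_op n (0, v) (pauli_op n (0, w) e) y)"
  shows "inner_on R e (pauli_op n (0, w) e) = 0"
proof -
  have "inner_on R e (pauli_op n (0, w) e) = inner_on R e (pauli_op n (0, w) (pauli_op n (0, v) e))"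
    by (simp only: fixed)
  also have "\<dots> = - inner_on R e (pauli_op n (0, v) (pauli_op n (0, w) e))"
    using inner_on_scale[of R e "-1"] by (simp add: anti)
  also have "inner_on R e (pauli_op n (0, v) (pauli_op n (0, w) e))
      = inner_on R (pauli_op n (0, v) e) (pauli_op n (0, w) e)"
    by (rule inner_on_pauli_op_adjoint[OF assms(1), symmetric])
  also have "\<dots> = inner_on R e (pauli_op n (0, w) e)"
    by (simp only: fixed)
  finally show ?thesis by simp
qed

section \<open>Stabilizer codes\<close>

lemma empty_in_Z2grp [simp]: "{} \<in> Z2grp m"
  by (simp add: Z2grp_def)

lemma gmul_in_Z2grp: "g \<in> Z2grp m \<Longrightarrow> h \<in> Z2grp m \<Longrightarrow> gmul g h \<in> Z2grp m"
  by (auto simp: Z2grp_def gmul_def)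

lemma finite_Z2grp: "finite (Z2grp m)" and card_Z2grp: "card (Z2grp m) = 2 ^ m"
  by (simp_all add: Z2grp_def card_Pow)

locale stabilizer_code =
  fixes n m :: nat and U :: "nat set \<Rightarrow> pstring"
  assumes valid: "\<forall>g\<in>Z2grp m. valid_pstring n (U g)"
    and unit: "U {} = identity_pstring"
    and hom: "\<forall>g\<in>Z2grp m. \<forall>h\<in>Z2grp m. pauli_op n (U g) \<circ> pauli_op n (U h) = pauli_op n (U (gmul g h))"
    and faithful: "inj_on (\<lambda>g. pauli_op n (U g)) (Z2grp m)"
    and no_minus: "\<forall>g\<in>Z2grp m. pauli_op n (U g) \<noteq> pauli_op n minus_identity_pstring"
begin

abbreviation word :: "nat set \<Rightarrow> nat \<Rightarrow> pauli" where
  "word g \<equiv> snd (U g)"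

lemma word_beyond_n: "g \<in> Z2grp m \<Longrightarrow> n \<le> a \<Longrightarrow> word g a = PI"
  using valid by (simp add: valid_pstring_def)

lemma word_unit: "word {} = (\<lambda>_. PI)"
  using unit by (simp add: identity_pstring_def)

lemma word_gmul: "g \<in> Z2grp m \<Longrightarrow> h \<in> Z2grp m \<Longrightarrow> word (gmul g h) = word_mult (word g) (word h)"
  using pauli_op_comp_eq_imp(1) valid hom gmul_in_Z2grp by metis

lemma prefactor_gmul:
  "g \<in> Z2grp m \<Longrightarrow> h \<in> Z2grp m \<Longrightarrow>
    \<i> ^ fst (U g) * \<i> ^ fst (U h) * word_mult_phase n (word g) (word h) = \<i> ^ fst (U (gmul g h))"
  using pauli_op_comp_eq_imp(2) valid hom gmul_in_Z2grp by metis

lemma words_commute: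
  assumes "g \<in> Z2grp m" "h \<in> Z2grp m"
  shows "word_mult_phase n (word g) (word h) = word_mult_phase n (word h) (word g)"
proof -
  have "gmul g h = gmul h g" by (auto simp: gmul_def)
  then have "(\<i> ^ fst (U g) * \<i> ^ fst (U h)) * word_mult_phase n (word g) (word h)
      = (\<i> ^ fst (U g) * \<i> ^ fst (U h)) * word_mult_phase n (word h) (word g)"
    using prefactor_gmul[OF assms] prefactor_gmul[OF assms(2,1)] by (simp add: mult.commute)
  then show ?thesis by simp
qed

text \<open>An element acting as the identity word is \<open>\<plusminus>I\<close> (its square is \<open>U {} = I\<close>), and both are
  excluded for \<open>g \<noteq> {}\<close>: \<open>I\<close> by faithfulness, \<open>-I\<close> by hypothesis.\<close>

lemma word_eq_identity_imp_unit:
  assumes "g \<in> Z2grp m" and "word g = (\<lambda>_. PI)"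
  shows "g = {}"
proof -
  have "\<i> ^ fst (U g) * \<i> ^ fst (U g) = 1"
    using prefactor_gmul[OF assms(1) assms(1)] unit by (simp add: gmul_def identity_pstring_def)
  moreover have "fst (U g) < 4" using valid assms(1) by (simp add: valid_pstring_def)
  ultimately have "fst (U g) = 0 \<or> fst (U g) = 2"
    by (auto simp: less_Suc_eq numeral_eq_Suc)
  then show ?thesis
  proof
    assume "fst (U g) = 0"
    then have "U g = U {}" using assms(2) unit by (simp add: identity_pstring_def prod_eq_iff)
    then show ?thesis using inj_onD[OF faithful _ assms(1) empty_in_Z2grp] by simp
  next
    assume "fst (U g) = 2"
    then have "U g = minus_identity_pstring" using assms(2) by (simp add: minus_identity_pstring_def prod_eq_iff)
    then show ?thesis using no_minus assms(1) by auto
  qed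
qed

lemma isotropic_embedding_words:
  "isotropic_embedding {..<n} (Z2grp m) (\<lambda>g. flip_support (word g)) (\<lambda>g. sign_support (word g))"
proof
  show "flip_support (word g) \<subseteq> {..<n}" "sign_support (word g) \<subseteq> {..<n}" if "g \<in> Z2grp m" for g
    using supports_below word_beyond_n[OF that] by blast+
  show "flip_support (word (sym_diff g h)) = sym_diff (flip_support (word g)) (flip_support (word h))"
    and "sign_support (word (sym_diff g h)) = sym_diff (sign_support (word g)) (sign_support (word h))"
    if "g \<in> Z2grp m" "h \<in> Z2grp m" for g h
    using word_gmul[OF that] by (simp_all add: gmul_def flip_support_word_mult sign_support_word_mult)
  show "g = {}" if "g \<in> Z2grp m" "flip_support (word g) = {}" "sign_support (word g) = {}" for g
    using that by (intro word_eq_identity_imp_unit) (auto simp: flip_support_def sign_support_def intro!: letter_eqI)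
  show "even (card (sym_diff (flip_support (word g) \<inter> sign_support (word h))
      (sign_support (word g) \<inter> flip_support (word h))))"
    if "g \<in> Z2grp m" "h \<in> Z2grp m" for g h
  proof -
    have "{a\<in>{..<n}. letters_anticommute (word g a) (word h a)}
        = sym_diff (flip_support (word g) \<inter> sign_support (word h))
            (sign_support (word g) \<inter> flip_support (word h))"
      using word_beyond_n[OF that(1)] by (rule anticommuting_sites)
    then show ?thesis using word_mult_phase_commute_imp_even[OF words_commute[OF that]] by metis
  qed
qed (auto simp: gmul_in_Z2grp[unfolded gmul_def])

end

locale pivoted_code = stabilizer_code +
  fixes R1 R2 :: "nat set"
  assumes pivots_disjoint: "R1 \<inter> R2 = {}"
    and pivots_below: "R1 \<union> R2 \<subseteq> {..<n}"
    and syndrome_bij: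
      "bij_betw (\<lambda>g. flip_support (word g) \<inter> R1 \<union> sign_support (word g) \<inter> R2) (Z2grp m) (Pow (R1 \<union> R2))"
begin

abbreviation R :: "nat set" where
  "R \<equiv> R1 \<union> R2"

abbreviation restricted_op :: "nat set \<Rightarrow> state \<Rightarrow> state" where
  "restricted_op g \<equiv> pauli_op n (restrict_pstring R (U g))"

definition cocycle :: "nat set \<Rightarrow> nat set \<Rightarrow> complex" where
  "cocycle g h = word_mult_phase n (restrict_word R (word g)) (restrict_word R (word h))"

definition pivot_letter :: "nat \<Rightarrow> pauli" where
  "pivot_letter a = (if a \<in> R1 then PZ else PX)"

text \<open>The seed is \<open>|0\<dots>0\<rangle>\<close> on \<open>R1\<close> tensor \<open>|+\<dots>+\<rangle>\<close> on \<open>R2\<close>, the common \<open>+1\<close> eigenstate of the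
  pivot letters \<open>Z\<close> on \<open>R1\<close> and \<open>X\<close> on \<open>R2\<close>.\<close>

definition seed :: state where
  "seed = (\<lambda>x. if x \<in> cfgs R2 then complex_of_real (1 / sqrt (2 ^ card R2)) else 0)"

lemma finite_R: "finite R"
  using pivots_below finite_subset by blast

lemma card_R: "card R = m"
proof -
  have "2 ^ m = card (Pow R)"
    using bij_betw_same_card[OF syndrome_bij] by (simp add: card_Z2grp)
  then show ?thesis using finite_R by (simp add: card_Pow)
qed

lemma restricted_op_comp:
  assumes "g \<in> Z2grp m" "h \<in> Z2grp m"
  shows "restricted_op g \<circ> restricted_op h = (\<lambda>\<psi> y. cocycle g h * restricted_op (gmul g h) \<psi> y)"
  by (simp add: fun_eq_iff pauli_op_restrict_pstring pauli_op_word_mult word_gmul[OF assms]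
      restrict_word_mult cocycle_def)

lemma cocycle_range: "cocycle g h \<in> {1, -1, \<i>, -\<i>}"
  unfolding cocycle_def by (rule word_mult_phase_range)

lemma restricted_op_inj: "inj_on restricted_op (Z2grp m)"
proof (rule inj_onI)
  fix g h assume "g \<in> Z2grp m" "h \<in> Z2grp m" and eq: "restricted_op g = restricted_op h"
  have below: "restrict_word R (word f) a = PI" if "n \<le> a" for f a
    using that pivots_below by (auto simp: restrict_word_def)
  have "(\<lambda>y. 1 * pauli_op n (0, restrict_word R (word g)) \<psi> y)
      = (\<lambda>y. 1 * pauli_op n (0, restrict_word R (word h)) \<psi> y)" for \<psi>
    using eq by (simp add: pauli_op_restrict_pstring)
  then have restricted_eq: "restrict_word R (word g) = restrict_word R (word h)"
    using scaled_pauli_op_eq_imp_eq[of n "restrict_word R (word g)" "restrict_word R (word h)" 1 1, OF below below]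
    by simp
  have "word g a = word h a" if "a \<in> R" for a
    using that fun_cong[OF restricted_eq, of a] by (simp add: restrict_word_def)
  then have "flip_support (word g) \<inter> R1 \<union> sign_support (word g) \<inter> R2
      = flip_support (word h) \<inter> R1 \<union> sign_support (word h) \<inter> R2"
    by (auto simp: flip_support_def sign_support_def)
  then show "g = h"
    using inj_onD[OF bij_betw_imp_inj_on[OF syndrome_bij]] \<open>g \<in> Z2grp m\<close> \<open>h \<in> Z2grp m\<close> by blast
qed

lemma nontrivial_anticommutes_pivot:
  assumes "u \<in> Z2grp m" "u \<noteq> {}"
  obtains a where "a \<in> R" "letters_anticommute (restrict_word R (word u) a) (pivot_letter a)"
proof -
  let ?syndrome = "\<lambda>g. flip_support (word g) \<inter> R1 \<union> sign_support (word g) \<inter> R2"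
  have "?syndrome {} = {}" by (simp add: word_unit flip_support_def sign_support_def)
  then have "?syndrome u \<noteq> {}"
    using assms inj_onD[OF bij_betw_imp_inj_on[OF syndrome_bij], of u "{}"] by auto
  then obtain a where "a \<in> flip_support (word u) \<inter> R1 \<or> a \<in> sign_support (word u) \<inter> R2" by blast
  moreover have "a \<notin> R1" if "a \<in> R2" using that pivots_disjoint by blast
  ultimately show ?thesis
    using that[of a] by (auto simp: pivot_letter_def restrict_word_def flip_support_def sign_support_def)
qed

lemma seed_in_states_on: "seed \<in> states_on R"
  by (auto simp: states_on_def seed_def cfgs_def)

lemma seed_normalized: "inner_on R seed seed = 1"
proof -
  let ?s = "complex_of_real (1 / sqrt (2 ^ card R2))"
  have "finite R2" using finite_R by blast
  have "cfgs R2 \<subseteq> cfgs R" by (auto simp: cfgs_def)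
  then have "inner_on R seed seed = (\<Sum>x\<in>cfgs R2. cnj ?s * ?s)"
    unfolding inner_on_def seed_def
    by (intro sum.mono_neutral_cong_right finite_cfgs finite_R) auto
  also have "\<dots> = 2 ^ card R2 * (cnj ?s * ?s)"
    using card_cfgs[OF \<open>finite R2\<close>] by simp
  also have "cnj ?s * ?s = complex_of_real (1 / 2 ^ card R2)"
    by (simp flip: of_real_mult)
  finally show ?thesis by (simp add: of_real_divide)
qed

lemma pivot_letter_fixes_seed:
  assumes "a \<in> R"
  shows "pauli_op n (0, (\<lambda>_. PI)(a := pivot_letter a)) seed = seed"
proof
  fix y
  have "a < n" using assms pivots_below by auto
  show "pauli_op n (0, (\<lambda>_. PI)(a := pivot_letter a)) seed y = seed y"
  proof (cases "a \<in> R1")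
    case True
    then have "a \<notin> R2" using pivots_disjoint by auto
    then have "seed y \<noteq> 0 \<Longrightarrow> \<not> y a" by (auto simp: seed_def cfgs_def split: if_splits)
    then show ?thesis using True \<open>a < n\<close>
      by (auto simp: pauli_op_def pivot_letter_def flip_cfg_single word_ph_single letter_flips_def)
  next
    case False
    then have "y(a := \<not> y a) \<in> cfgs R2 \<longleftrightarrow> y \<in> cfgs R2" using assms by (auto simp: cfgs_def)
    then show ?thesis using False \<open>a < n\<close>
      by (simp add: pauli_op_def pivot_letter_def flip_cfg_single word_ph_single letter_flips_def seed_def)
  qed
qed

lemma seed_orthogonal:
  assumes "u \<in> Z2grp m" "u \<noteq> {}"
  shows "inner_on R seed (restricted_op u seed) = 0"
proof -
  obtain a where "a \<in> R" and anti: "letters_anticommute (restrict_word R (word u) a) (pivot_letter a)"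
    using nontrivial_anticommutes_pivot[OF assms] .
  have "a < n" using \<open>a \<in> R\<close> pivots_below by auto
  have "((\<lambda>_. PI)(a := pivot_letter a)) b = PI" if "b \<notin> R" for b
    using that \<open>a \<in> R\<close> by auto
  then show ?thesis
    unfolding pauli_op_restrict_pstring
    by (rule inner_on_anticommuting_fixed[OF _ pivot_letter_fixes_seed[OF \<open>a \<in> R\<close>]
          pauli_op_single_anticommute[of a n "restrict_word R (word u)", OF \<open>a < n\<close> anti]])
qed

lemma restricted_op_unit: "restricted_op {} = id"
  by (simp add: fun_eq_iff pauli_op_restrict_pstring restrict_word_def word_unit)

lemma kets_orthonormal:
  assumes "g \<in> Z2grp m" "h \<in> Z2grp m"
  shows "inner_on R (restricted_op g seed) (restricted_op h seed) = (if g = h then 1 else 0)"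
proof -
  have "inner_on R (restricted_op g seed) (restricted_op h seed)
      = inner_on R seed (restricted_op g (restricted_op h seed))"
    unfolding pauli_op_restrict_pstring by (rule inner_on_pauli_op_adjoint) (simp add: restrict_word_def)
  also have "\<dots> = cocycle g h * inner_on R seed (restricted_op (gmul g h) seed)"
    using fun_cong[OF restricted_op_comp[OF assms], of seed] by (simp add: inner_on_scale)
  finally show ?thesis
    using seed_orthogonal[OF gmul_in_Z2grp[OF assms]] seed_normalized
    by (auto simp: gmul_def restricted_op_unit cocycle_def)
qed

lemma kets_transform:
  assumes "g \<in> Z2grp m" "h \<in> Z2grp m"
  shows "restricted_op g (restricted_op h seed) = (\<lambda>x. cocycle g h * restricted_op (gmul g h) seed x)"
  using fun_cong[OF restricted_op_comp[OF assms], of seed] by simp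

lemma kets_span:
  assumes "\<psi> \<in> states_on R"
  shows "\<exists>a. \<psi> = (\<lambda>x. \<Sum>g\<in>Z2grp m. a g * restricted_op g seed x)"
proof (rule orthonormal_family_spans[OF finite_R finite_Z2grp _ _ kets_orthonormal assms])
  show "card (Z2grp m) = 2 ^ card R" by (simp add: card_Z2grp card_R)
  show "restricted_op g seed \<in> states_on R" for g
    unfolding pauli_op_restrict_pstring
    by (rule pauli_op_states_on[OF _ seed_in_states_on]) (simp add: restrict_word_def)
qed

end

theorem mainTheorem3:
  fixes n k :: nat and U :: "nat set \<Rightarrow> pstring"
  assumes kn: "k \<le> n"
    and valid: "\<forall>g\<in>Z2grp (n - k). valid_pstring n (U g)"
    and unit: "U {} = identity_pstring"
    and hom: "\<forall>g\<in>Z2grp (n - k). \<forall>h\<in>Z2grp (n - k).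
                 pauli_op n (U g) \<circ> pauli_op n (U h) = pauli_op n (U (gmul g h))"
    and faithful: "inj_on (\<lambda>g. pauli_op n (U g)) (Z2grp (n - k))"
    and no_minus: "\<forall>g\<in>Z2grp (n - k). pauli_op n (U g) \<noteq> pauli_op n minus_identity_pstring"
  shows "\<exists>R. R \<subseteq> {..<n} \<and> card R = n - k \<and>
    (let G = Z2grp (n - k); UR = (\<lambda>g. pauli_op n (restrict_pstring R (U g))) in
     \<exists>c :: nat set \<Rightarrow> nat set \<Rightarrow> complex.
       inj_on UR G \<and>
       (\<forall>g\<in>G. \<forall>g'\<in>G. c g g' \<in> {1, -1, \<i>, -\<i>} \<and>
           UR g \<circ> UR g' = (\<lambda>\<psi> y. c g g' * UR (gmul g g') \<psi> y)) \<and>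
       (\<exists>e \<in> states_on R.
          let ket = (\<lambda>g. UR g e) in
          (\<forall>g\<in>G. \<forall>g'\<in>G. inner_on R (ket g) (ket g') = (if g = g' then 1 else 0)) \<and>
          (\<forall>\<psi>\<in>states_on R. \<exists>a :: nat set \<Rightarrow> complex.
               \<psi> = (\<lambda>x. \<Sum>g\<in>G. a g * ket g x)) \<and>
          (\<forall>g\<in>G. \<forall>g'\<in>G. UR g (ket g') = (\<lambda>x. c g g' * ket (gmul g g') x))))"
proof -
  interpret stabilizer_code n "n - k" U
    using valid unit hom faithful no_minus by unfold_locales
  obtain R1 R2 where pivots: "R1 \<inter> R2 = {}" "R1 \<union> R2 \<subseteq> {..<n}"
    "bij_betw (\<lambda>g. flip_support (word g) \<inter> R1 \<union> sign_support (word g) \<inter> R2) (Z2grp (n - k)) (Pow (R1 \<union> R2))"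
    by (rule isotropic_embedding.information_sets[OF isotropic_embedding_words])
  interpret pivoted_code n "n - k" U R1 R2
    using pivots by unfold_locales
  show ?thesis
    unfolding Let_def
    using pivots_below card_R restricted_op_inj cocycle_range restricted_op_comp
      seed_in_states_on kets_orthonormal kets_span kets_transform
    by (intro exI[of _ "R1 \<union> R2"] exI[of _ cocycle] conjI bexI[of _ seed] ballI) simp_all
qed

end
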